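(* Let $p$ be a prime, $k\ge1$, $\Gamma=\mathbb{Z}_p\,\mathrm{wr}\,\mathbb{Z}^k=\Sigma\rtimes_\alpha\mathbb{Z}^k$ with $\Sigma=\bigoplus_{x\in\mathbb{Z}^k}A_x$, and let $\phi:\Gamma\to\Gamma$ be an automorphism with restriction $\phi'=\phi|_\Sigma$. Then $\phi'(\delta_0)=m\cdot\delta_{x_0}$ for some $x_0\in\mathbb{Z}^k$ and some $0\neq m\in\mathbb{Z}_p$.
   Context: $\mathbb{Z}_p\,\mathrm{wr}\,\mathbb{Z}^k$ is the semidirect product $\Sigma\rtimes_\alpha\mathbb{Z}^k$, where $\Sigma=\bigoplus_{x\in\mathbb{Z}^k}A_x$ (finitely supported elements), each $A_x\cong\mathbb{Z}_p$ is generated by $\delta_x$, and $\alpha(y)(\delta_x)=\delta_{y+x}$ for $y\in\mathbb{Z}^k$. $\Sigma$ is the torsion subgroup, hence characteristic, so $\phi(\Sigma)=\Sigma$. *)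

theory Defs
  imports "HOL-Computational_Algebra.Primes" "HOL-Algebra.Group"
begin

text \<open>The lattice Z^k, represented as integer vectors indexed by nat,
  vanishing outside the coordinates 0..k-1.\<close>
definition lattice :: "nat \<Rightarrow> (nat \<Rightarrow> int) set" where
  "lattice k = {v. \<forall>i\<ge>k. v i = 0}"

text \<open>Sigma = finitely supported functions Z^k -> Z_p (values in {0..<p}),
  zero outside Z^k.\<close>
definition Sigma_wr :: "nat \<Rightarrow> nat \<Rightarrow> ((nat \<Rightarrow> int) \<Rightarrow> int) set" where
  "Sigma_wr p k = {f. (\<forall>x. f x \<in> {0..<int p}) \<and> (\<forall>x. x \<notin> lattice k \<longrightarrow> f x = 0)
                      \<and> finite {x. f x \<noteq> 0}}"

text \<open>The shift action: alpha(y)(f)(x) = f(x - y), so alpha(y)(delta_x) = delta_(y+x).\<close>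
definition shift_act :: "(nat \<Rightarrow> int) \<Rightarrow> ((nat \<Rightarrow> int) \<Rightarrow> int) \<Rightarrow> ((nat \<Rightarrow> int) \<Rightarrow> int)" where
  "shift_act y f = (\<lambda>x. f (\<lambda>i. x i - y i))"

definition lamplighter :: "nat \<Rightarrow> nat \<Rightarrow> (((nat \<Rightarrow> int) \<Rightarrow> int) \<times> (nat \<Rightarrow> int)) monoid" where
  "lamplighter p k = \<lparr> carrier = Sigma_wr p k \<times> lattice k,
      mult = (\<lambda>(f, y) (g, z). ((\<lambda>x. (f x + shift_act y g x) mod int p), (\<lambda>i. y i + z i))),
      one = ((\<lambda>_. 0), (\<lambda>_. 0)) \<rparr>"

definition lamp :: "nat \<Rightarrow> int \<Rightarrow> (nat \<Rightarrow> int) \<Rightarrow> ((nat \<Rightarrow> int) \<Rightarrow> int)" where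
  "lamp p m x0 = (\<lambda>x. if x = x0 then m mod int p else 0)"

end

theory Submission
  imports Defs "HOL-Library.Function_Algebras"
begin

(* Elements of order dividing p are exactly those of the lamp group Sigma, so phi maps Sigma onto
   itself. Writing u = phi(delta_0) and (g, psi y) = phi(0, y), the relation
   (0, y) (c delta_0) = (c delta_y) (0, y) shows that phi(c delta_y) is c u translated by psi y.
   A preimage sum_y s_y delta_y of delta_0 thus exhibits delta_0 as a convolution w * u over Z^k
   with coefficients mod p. For an additive h : Z^k -> Z injective on the finitely many points
   involved, the h-maximal points of the supports of u and w contribute the product of two
   nonzero residues to the coefficient of their sum, with no cancellation; so that sum is 0.
   The same holds for the h-minimal points, so h is constant on the support of u, which is
   therefore a single point. *)

lemma finite_ex_argmax:
  fixes f :: "'a \<Rightarrow> 'b::linorder"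
  assumes "finite S" "S \<noteq> {}"
  obtains a where "a \<in> S" "\<And>x. x \<in> S \<Longrightarrow> f x \<le> f a"
proof -
  have "Max (f ` S) \<in> f ` S" using assms by simp
  then obtain a where "a \<in> S" "f a = Max (f ` S)" by (metis imageE)
  with assms show thesis by (intro that) auto
qed

lemma argmax_sum_unique:
  fixes h :: "'a::plus \<Rightarrow> int"
  assumes add: "\<And>x y. h (x + y) = h x + h y"
    and inj: "inj_on h U" "inj_on h W"
    and a: "a \<in> U" "\<And>x. x \<in> U \<Longrightarrow> h x \<le> h a"
    and b: "b \<in> W" "\<And>y. y \<in> W \<Longrightarrow> h y \<le> h b"
    and xy: "x \<in> U" "y \<in> W" "x + y = a + b"
  shows "x = a \<and> y = b"
proof -
  have "h x + h y = h a + h b" using xy(3) add by metis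
  then have "h x = h a" "h y = h b" using a(2)[OF xy(1)] b(2)[OF xy(2)] by linarith+
  then show ?thesis using inj a(1) b(1) xy(1,2) by (auto dest: inj_onD)
qed

lemma sum_mod_eq_sum_subset:
  fixes f :: "'a \<Rightarrow> int"
  assumes "finite B" "B' \<subseteq> B" "\<And>z. z \<in> B - B' \<Longrightarrow> p dvd f z"
  shows "(\<Sum>z\<in>B. f z) mod p = (\<Sum>z\<in>B'. f z) mod p"
proof -
  have "p dvd (\<Sum>z\<in>B - B'. f z)" using assms(3) by (rule dvd_sum)
  then show ?thesis
    using sum.subset_diff[OF assms(2,1), of f] by (simp add: mod_add_left_eq[symmetric])
qed

lemma convolution_delta_argmax_sum_eq_0:
  fixes u w :: "'a::ab_group_add \<Rightarrow> int" and h :: "'a \<Rightarrow> int" and p :: int and B :: "'a set"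
  defines "U \<equiv> {x. \<not> p dvd u x}" and "W \<equiv> {z \<in> B. \<not> p dvd w z}"
  assumes p: "prime p" and B: "finite B"
    and conv: "\<And>x. (\<Sum>z\<in>B. w z * u (x - z)) mod p = (if x = 0 then 1 else 0)"
    and add: "\<And>x y. h (x + y) = h x + h y" and inj: "inj_on h U" "inj_on h W"
    and a: "a \<in> U" "\<And>x. x \<in> U \<Longrightarrow> h x \<le> h a"
    and b: "b \<in> W" "\<And>y. y \<in> W \<Longrightarrow> h y \<le> h b"
  shows "a + b = 0"
proof -
  have only_b: "{z \<in> B. z \<in> W \<and> a + b - z \<in> U} = {b}"
  proof (intro equalityI subsetI)
    fix z assume z: "z \<in> {z \<in> B. z \<in> W \<and> a + b - z \<in> U}"
    have "a + b - z + z = a + b" by simp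
    then have "z = b"
      using argmax_sum_unique[OF add inj a b, of "a + b - z" z] z by blast
    then show "z \<in> {b}" by simp
  next
    fix z assume "z \<in> {b}"
    then show "z \<in> {z \<in> B. z \<in> W \<and> a + b - z \<in> U}"
      using a(1) b(1) by (simp add: W_def)
  qed
  have "(\<Sum>z\<in>B. w z * u (a + b - z)) mod p = (\<Sum>z\<in>{b}. w z * u (a + b - z)) mod p"
    unfolding only_b[symmetric]
    by (rule sum_mod_eq_sum_subset) (auto simp: B U_def W_def)
  then have "(w b * u a) mod p = (if a + b = 0 then 1 else 0)" using conv[of "a + b"] by simp
  moreover have "\<not> p dvd w b * u a"
    using a(1) b(1) p by (simp add: U_def W_def prime_dvd_mult_iff)
  ultimately show ?thesis by (auto split: if_splits)
qed

lemma convolution_delta_nonzero_pair: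
  fixes u w :: "'a::ab_group_add \<Rightarrow> int" and p :: int
  assumes p: "prime p"
    and conv: "\<And>x. (\<Sum>z\<in>B. w z * u (x - z)) mod p = (if x = 0 then 1 else 0)"
  obtains z where "z \<in> B" "\<not> p dvd w z" "\<not> p dvd u (0 - z)"
proof -
  have "\<exists>z\<in>B. \<not> p dvd w z * u (0 - z)"
  proof (rule ccontr)
    assume "\<not> ?thesis"
    then have "(\<Sum>z\<in>B. w z * u (0 - z)) mod p = 0" by (simp add: dvd_sum)
    with conv[of 0] p show False by simp
  qed
  then show thesis by (meson dvd_mult dvd_mult2 that)
qed

lemma convolution_delta_support_singleton:
  fixes u w :: "'a::ab_group_add \<Rightarrow> int" and h :: "'a \<Rightarrow> int" and p :: int and B :: "'a set"
  defines "U \<equiv> {x. \<not> p dvd u x}" and "W \<equiv> {z \<in> B. \<not> p dvd w z}"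
  assumes p: "prime p" and B: "finite B" and U: "finite U"
    and conv: "\<And>x. (\<Sum>z\<in>B. w z * u (x - z)) mod p = (if x = 0 then 1 else 0)"
    and add: "\<And>x y. h (x + y) = h x + h y" and inj: "inj_on h U" "inj_on h W"
  shows "\<exists>a. U = {a}"
proof -
  have W: "finite W" using B by (simp add: W_def)
  obtain z where "z \<in> W" "0 - z \<in> U"
    using convolution_delta_nonzero_pair[OF p conv] by (auto simp: U_def W_def)
  then have "U \<noteq> {}" "W \<noteq> {}" by auto
  obtain a1 where a1: "a1 \<in> U" "\<And>x. x \<in> U \<Longrightarrow> h x \<le> h a1"
    using finite_ex_argmax[OF U \<open>U \<noteq> {}\<close>, of "h"] by blast
  obtain b1 where b1: "b1 \<in> W" "\<And>y. y \<in> W \<Longrightarrow> h y \<le> h b1"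
    using finite_ex_argmax[OF W \<open>W \<noteq> {}\<close>, of "h"] by blast
  obtain a0 where a0: "a0 \<in> U" "\<And>x. x \<in> U \<Longrightarrow> - h x \<le> - h a0"
    using finite_ex_argmax[OF U \<open>U \<noteq> {}\<close>, of "\<lambda>x. - h x"] by blast
  obtain b0 where b0: "b0 \<in> W" "\<And>y. y \<in> W \<Longrightarrow> - h y \<le> - h b0"
    using finite_ex_argmax[OF W \<open>W \<noteq> {}\<close>, of "\<lambda>x. - h x"] by blast
  have add': "\<And>x y. - h (x + y) = - h x + - h y" using add by simp
  have inj': "inj_on (\<lambda>x. - h x) U" "inj_on (\<lambda>x. - h x) W"
    using inj by (auto simp: inj_on_def)
  have "a1 + b1 = 0"
    by (rule convolution_delta_argmax_sum_eq_0[OF p B conv add inj[unfolded U_def W_def]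
          a1[unfolded U_def] b1[unfolded W_def]])
  moreover have "a0 + b0 = 0"
    by (rule convolution_delta_argmax_sum_eq_0[OF p B conv add' inj'[unfolded U_def W_def]
          a0[unfolded U_def] b0[unfolded W_def]])
  ultimately have "h a1 + h b1 = h a0 + h b0" by (metis add)
  moreover have "h a0 \<le> h a1" "h b0 \<le> h b1" using a1 b1 a0(1) b0(1) by auto
  ultimately have "h x = h a1" if "x \<in> U" for x
    using a1(2)[OF that] a0(2)[OF that] by linarith
  then have "U = {a1}" using inj(1) a1(1) by (auto dest: inj_onD)
  then show ?thesis by blast
qed

lemma base_expansion_eq_0:
  fixes d :: "nat \<Rightarrow> int"
  assumes "\<And>i. i < k \<Longrightarrow> \<bar>d i\<bar> < N" "(\<Sum>i<k. d i * N ^ i) = 0"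
  shows "i < k \<Longrightarrow> d i = 0"
  using assms
proof (induction k arbitrary: d i)
  case 0 then show ?case by simp
next
  case (Suc k)
  have "(\<Sum>i<Suc k. d i * N ^ i) = d 0 + N * (\<Sum>i<k. d (Suc i) * N ^ i)"
    by (subst sum.lessThan_Suc_shift) (simp add: sum_distrib_left algebra_simps)
  then have sum: "d 0 + N * (\<Sum>i<k. d (Suc i) * N ^ i) = 0" using Suc.prems(3) by simp
  have small: "\<bar>d 0\<bar> < N" using Suc.prems(2) by simp
  have "d 0 = - (N * (\<Sum>i<k. d (Suc i) * N ^ i))" using sum by linarith
  then have "N dvd d 0" by simp
  have d0: "d 0 = 0"
  proof (rule ccontr)
    assume "d 0 \<noteq> 0"
    then have "\<bar>N\<bar> \<le> \<bar>d 0\<bar>" using \<open>N dvd d 0\<close> by (rule dvd_imp_le_int)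
    then show False using small by linarith
  qed
  then have "(\<Sum>i<k. d (Suc i) * N ^ i) = 0" using sum small by simp
  then have "d (Suc j) = 0" if "j < k" for j
    using Suc.IH[of j "\<lambda>i. d (Suc i)"] Suc.prems(2) that by simp
  then show ?case using d0 Suc.prems(1) by (cases i) auto
qed

lemma exists_additive_inj_on_lattice:
  assumes "finite S" "S \<subseteq> lattice k"
  shows "\<exists>h :: (nat \<Rightarrow> int) \<Rightarrow> int. (\<forall>x y. h (x + y) = h x + h y) \<and> inj_on h S"
proof -
  define N where "N = 2 * (\<Sum>x\<in>S. \<Sum>i<k. \<bar>x i\<bar>) + 1"
  define h where "h x = (\<Sum>i<k. x i * N ^ i)" for x :: "nat \<Rightarrow> int"
  have bound: "2 * \<bar>x i\<bar> < N" if "x \<in> S" "i < k" for x i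
  proof -
    have "\<bar>x i\<bar> \<le> (\<Sum>i<k. \<bar>x i\<bar>)"
      using that(2) member_le_sum[of i "{..<k}" "\<lambda>i. \<bar>x i\<bar>"] by simp
    also have "\<dots> \<le> (\<Sum>x\<in>S. \<Sum>i<k. \<bar>x i\<bar>)"
      using assms(1) that(1) member_le_sum[of x S "\<lambda>x. \<Sum>i<k. \<bar>x i\<bar>"]
      by (simp add: sum_nonneg)
    finally show ?thesis by (simp add: N_def)
  qed
  have "x = y" if "x \<in> S" "y \<in> S" "h x = h y" for x y
  proof
    fix i
    have "(\<Sum>i<k. (x i - y i) * N ^ i) = 0"
      using that(3) by (simp add: h_def left_diff_distrib sum_subtractf)
    moreover have "\<bar>x i - y i\<bar> < N" if "i < k" for i
      using bound[OF \<open>x \<in> S\<close> that] bound[OF \<open>y \<in> S\<close> that] by linarith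
    ultimately have "i < k \<Longrightarrow> x i - y i = 0"
      using base_expansion_eq_0[of k "\<lambda>i. x i - y i" N] by blast
    moreover have "\<not> i < k \<Longrightarrow> x i = 0 \<and> y i = 0"
      using that(1,2) assms(2) by (auto simp: lattice_def)
    ultimately show "x i = y i" by force
  qed
  then have "inj_on h S" by (rule inj_onI)
  moreover have "h (x + y) = h x + h y" for x y
    by (simp add: h_def distrib_right sum.distrib)
  ultimately show ?thesis by blast
qed

lemma sum_mult_regroup_image:
  fixes s f :: "_ \<Rightarrow> 'a::semiring_0"
  assumes "finite S"
  shows "(\<Sum>z\<in>S. s z * f (g z)) = (\<Sum>b\<in>g ` S. (\<Sum>z\<in>{z \<in> S. g z = b}. s z) * f b)"
proof -
  have "(\<Sum>z\<in>S. s z * f (g z)) = (\<Sum>b\<in>g ` S. \<Sum>z\<in>{z \<in> S. g z = b}. s z * f (g z))"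
    by (rule sum.image_gen[OF assms])
  also have "\<dots> = (\<Sum>b\<in>g ` S. (\<Sum>z\<in>{z \<in> S. g z = b}. s z) * f b)"
    by (simp add: sum_distrib_right)
  finally show ?thesis .
qed

lemma lamplighter_carrier: "carrier (lamplighter p k) = Sigma_wr p k \<times> lattice k"
  by (simp add: lamplighter_def)

lemma lamplighter_one: "\<one>\<^bsub>lamplighter p k\<^esub> = (0, 0)"
  by (simp add: lamplighter_def zero_fun_def)

lemma lamplighter_mult:
  "(f, y) \<otimes>\<^bsub>lamplighter p k\<^esub> (g, z) = (\<lambda>x. (f x + g (x - y)) mod int p, y + z)"
  by (simp add: lamplighter_def shift_act_def fun_diff_def plus_fun_def)

lemma Sigma_wr_mod [simp]: "f \<in> Sigma_wr p k \<Longrightarrow> f x mod int p = f x"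
  by (simp add: Sigma_wr_def)

lemma lattice_add: "x \<in> lattice k \<Longrightarrow> y \<in> lattice k \<Longrightarrow> x + y \<in> lattice k"
  by (simp add: lattice_def)

lemma lattice_uminus: "x \<in> lattice k \<Longrightarrow> - x \<in> lattice k"
  by (simp add: lattice_def)

lemma lattice_zero: "0 \<in> lattice k"
  by (simp add: lattice_def)

lemma Sigma_wr_shift_combination:
  assumes "p > 0" "f \<in> Sigma_wr p k" "g \<in> Sigma_wr p k" "y \<in> lattice k"
  shows "(\<lambda>x. (a * f x + b * g (x - y)) mod int p) \<in> Sigma_wr p k"
proof -
  let ?h = "\<lambda>x. (a * f x + b * g (x - y)) mod int p"
  have "{x. ?h x \<noteq> 0} \<subseteq> {x. f x \<noteq> 0} \<union> (\<lambda>x. x + y) ` {x. g x \<noteq> 0}"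
  proof
    fix x assume "x \<in> {x. ?h x \<noteq> 0}"
    then have "f x \<noteq> 0 \<or> g (x - y) \<noteq> 0" by auto
    moreover have "x = (x - y) + y" by simp
    ultimately show "x \<in> {x. f x \<noteq> 0} \<union> (\<lambda>x. x + y) ` {x. g x \<noteq> 0}" by blast
  qed
  moreover have "finite ({x. f x \<noteq> 0} \<union> (\<lambda>x. x + y) ` {x. g x \<noteq> 0})"
    using assms(2,3) by (simp add: Sigma_wr_def)
  ultimately have "finite {x. ?h x \<noteq> 0}" by (rule finite_subset)
  moreover have "?h x = 0" if "x \<notin> lattice k" for x
  proof -
    have "x - y \<notin> lattice k" using that assms(4) lattice_add by fastforce
    then show ?thesis using that assms(2,3) by (simp add: Sigma_wr_def)
  qed
  ultimately show ?thesis using assms(1) by (simp add: Sigma_wr_def)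
qed

lemma group_lamplighter: "p > 0 \<Longrightarrow> group (lamplighter p k)"
proof (rule groupI)
  assume p: "p > 0"
  let ?G = "lamplighter p k"
  show "x \<otimes>\<^bsub>?G\<^esub> y \<in> carrier ?G" if "x \<in> carrier ?G" "y \<in> carrier ?G" for x y
    using that Sigma_wr_shift_combination[OF p, of _ k _ _ 1 1] lattice_add
    by (auto simp: lamplighter_carrier lamplighter_mult)
  show "\<one>\<^bsub>?G\<^esub> \<in> carrier ?G"
    using p by (simp add: lamplighter_carrier lamplighter_one Sigma_wr_def lattice_zero)
  show "(x \<otimes>\<^bsub>?G\<^esub> y) \<otimes>\<^bsub>?G\<^esub> z = x \<otimes>\<^bsub>?G\<^esub> (y \<otimes>\<^bsub>?G\<^esub> z)" for x y z
    by (cases x, cases y, cases z)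
      (simp add: lamplighter_mult mod_add_left_eq mod_add_right_eq add.assoc diff_diff_eq)
  show "\<one>\<^bsub>?G\<^esub> \<otimes>\<^bsub>?G\<^esub> x = x" if "x \<in> carrier ?G" for x
    using that by (cases x) (auto simp: lamplighter_carrier lamplighter_one lamplighter_mult)
  show "\<exists>y \<in> carrier ?G. y \<otimes>\<^bsub>?G\<^esub> x = \<one>\<^bsub>?G\<^esub>" if x_carrier: "x \<in> carrier ?G" for x
  proof -
    obtain f z where x: "x = (f, z)" and f: "f \<in> Sigma_wr p k" and z: "z \<in> lattice k"
      using x_carrier by (auto simp: lamplighter_carrier)
    let ?g = "\<lambda>x. (- f (x + z)) mod int p"
    have "?g \<in> Sigma_wr p k"
      using Sigma_wr_shift_combination[OF p f f lattice_uminus[OF z], of 0 "- 1"] by simp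
    moreover have "(?g, - z) \<otimes>\<^bsub>?G\<^esub> x = \<one>\<^bsub>?G\<^esub>"
      by (simp add: x lamplighter_mult lamplighter_one mod_add_left_eq zero_fun_def)
    ultimately show ?thesis using lattice_uminus[OF z] by (auto simp: lamplighter_carrier)
  qed
qed

lemma lamplighter_translate_commute:
  "(g, z) \<otimes>\<^bsub>lamplighter p k\<^esub> (f, 0) = (\<lambda>x. f (x - z), 0) \<otimes>\<^bsub>lamplighter p k\<^esub> (g, z)"
  by (simp add: lamplighter_mult add.commute)

lemma lamplighter_pow_snd:
  "snd (x [^]\<^bsub>lamplighter p k\<^esub> n) = (\<lambda>i. int n * snd x i)"
proof (induction n)
  case 0 then show ?case by (simp add: lamplighter_one zero_fun_def)
next
  case (Suc n) then show ?case
    by (cases "x [^]\<^bsub>lamplighter p k\<^esub> n", cases x) (simp add: lamplighter_mult algebra_simps)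
qed

lemma lamplighter_pow_base:
  "(f, 0) [^]\<^bsub>lamplighter p k\<^esub> n = (\<lambda>x. (int n * f x) mod int p, 0)"
proof (induction n)
  case 0 then show ?case by (simp add: lamplighter_one zero_fun_def)
next
  case (Suc n) then show ?case
    by (simp add: lamplighter_mult fun_diff_def zero_fun_def algebra_simps mod_add_right_eq)
qed

lemma lamplighter_pow_eq_one_iff:
  assumes "x \<in> carrier (lamplighter p k)"
  shows "x [^]\<^bsub>lamplighter p k\<^esub> p = \<one>\<^bsub>lamplighter p k\<^esub> \<longleftrightarrow> snd x = 0"
proof
  assume "x [^]\<^bsub>lamplighter p k\<^esub> p = \<one>\<^bsub>lamplighter p k\<^esub>"
  then have "(\<lambda>i. int p * snd x i) = 0"
    using lamplighter_pow_snd[where x = x and n = p and p = p and k = k] by (simp add: lamplighter_one)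
  moreover have "p > 0" using assms by (auto simp: lamplighter_carrier Sigma_wr_def)
  ultimately show "snd x = 0" by (simp add: fun_eq_iff)
next
  assume "snd x = 0"
  then have "x = (fst x, 0)" by (simp add: prod_eq_iff)
  then show "x [^]\<^bsub>lamplighter p k\<^esub> p = \<one>\<^bsub>lamplighter p k\<^esub>"
    using lamplighter_pow_base[where f = "fst x" and n = p and p = p and k = k]
    by (simp add: lamplighter_one zero_fun_def)
qed

lemma lamp_in_Sigma_wr: "p > 0 \<Longrightarrow> y \<in> lattice k \<Longrightarrow> lamp p c y \<in> Sigma_wr p k"
proof -
  assume "p > 0" "y \<in> lattice k"
  moreover have "{x. lamp p c y x \<noteq> 0} \<subseteq> {y}" by (auto simp: lamp_def)
  ultimately show ?thesis by (auto simp: Sigma_wr_def lamp_def intro: finite_subset)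
qed

lemma Sigma_wr_upd_0: "p > 0 \<Longrightarrow> f \<in> Sigma_wr p k \<Longrightarrow> f(y := 0) \<in> Sigma_wr p k"
proof -
  assume "p > 0" "f \<in> Sigma_wr p k"
  moreover have "{x. (f(y := 0)) x \<noteq> 0} \<subseteq> {x. f x \<noteq> 0}" by auto
  ultimately show ?thesis by (auto simp: Sigma_wr_def intro: finite_subset)
qed

locale lamplighter_automorphism =
  fixes p k :: nat and \<phi> :: "((nat \<Rightarrow> int) \<Rightarrow> int) \<times> (nat \<Rightarrow> int) \<Rightarrow> ((nat \<Rightarrow> int) \<Rightarrow> int) \<times> (nat \<Rightarrow> int)"
  assumes prime: "prime p" and iso: "\<phi> \<in> iso (lamplighter p k) (lamplighter p k)"
begin

abbreviation \<Gamma> where "\<Gamma> \<equiv> lamplighter p k"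

lemma p_pos: "p > 0"
  using prime by (simp add: prime_gt_0_nat)

sublocale group_hom \<Gamma> \<Gamma> \<phi>
  using group_lamplighter[OF p_pos] iso
  by (simp add: group_hom_def group_hom_axioms_def iso_def)

lemma snd_image_eq_0_iff:
  assumes "x \<in> carrier \<Gamma>"
  shows "snd (\<phi> x) = 0 \<longleftrightarrow> snd x = 0"
proof -
  have "\<phi> (x [^]\<^bsub>\<Gamma>\<^esub> p) = \<phi> \<one>\<^bsub>\<Gamma>\<^esub> \<longleftrightarrow> x [^]\<^bsub>\<Gamma>\<^esub> p = \<one>\<^bsub>\<Gamma>\<^esub>"
    using iso assms by (intro inj_on_eq_iff) (auto simp: iso_def bij_betw_def)
  then show ?thesis
    using lamplighter_pow_eq_one_iff[OF assms] lamplighter_pow_eq_one_iff[OF hom_closed[OF assms]]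
    by (simp add: assms hom_nat_pow)
qed

definition delta_image :: "(nat \<Rightarrow> int) \<Rightarrow> int" where
  "delta_image = fst (\<phi> (lamp p 1 0, 0))"

definition translation_image :: "(nat \<Rightarrow> int) \<Rightarrow> nat \<Rightarrow> int" where
  "translation_image y = snd (\<phi> (0, y))"

lemma base_in_carrier: "f \<in> Sigma_wr p k \<Longrightarrow> (f, 0) \<in> carrier \<Gamma>"
  by (simp add: lamplighter_carrier lattice_zero)

lemma image_base_snd: "f \<in> Sigma_wr p k \<Longrightarrow> \<phi> (f, 0) = (fst (\<phi> (f, 0)), 0)"
  using snd_image_eq_0_iff[OF base_in_carrier] by (simp add: prod_eq_iff)

lemma image_base_fst_in_Sigma_wr: "f \<in> Sigma_wr p k \<Longrightarrow> fst (\<phi> (f, 0)) \<in> Sigma_wr p k"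
  using hom_closed[OF base_in_carrier] by (force simp: lamplighter_carrier)

lemma translation_in_carrier: "y \<in> lattice k \<Longrightarrow> (0, y) \<in> carrier \<Gamma>"
  using p_pos by (simp add: lamplighter_carrier Sigma_wr_def)

lemma lamp_origin_in_Sigma_wr: "lamp p c 0 \<in> Sigma_wr p k"
  by (rule lamp_in_Sigma_wr[OF p_pos lattice_zero])

lemma delta_image_in_Sigma_wr: "delta_image \<in> Sigma_wr p k"
  unfolding delta_image_def by (rule image_base_fst_in_Sigma_wr[OF lamp_origin_in_Sigma_wr])

lemma translation_image_in_lattice: "y \<in> lattice k \<Longrightarrow> translation_image y \<in> lattice k"
  using hom_closed[of "(0, y)"] p_pos
  by (auto simp: translation_image_def lamplighter_carrier Sigma_wr_def)

lemma image_lamp: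
  assumes c: "0 \<le> c" "c < int p" and y: "y \<in> lattice k"
  shows "\<phi> (lamp p c y, 0) = (\<lambda>x. (c * delta_image (x - translation_image y)) mod int p, 0)"
proof -
  let ?u = "delta_image" and ?z = "translation_image y"
  have "(lamp p c 0, 0) = (lamp p 1 0, 0) [^]\<^bsub>\<Gamma>\<^esub> nat c"
    using c prime_gt_1_nat[OF prime] by (simp add: lamplighter_pow_base lamp_def fun_eq_iff)
  then have "\<phi> (lamp p c 0, 0) = (?u, 0) [^]\<^bsub>\<Gamma>\<^esub> nat c"
    using hom_nat_pow[OF base_in_carrier[OF lamp_origin_in_Sigma_wr]]
      image_base_snd[OF lamp_origin_in_Sigma_wr] by (simp add: delta_image_def)
  then have pow: "\<phi> (lamp p c 0, 0) = (\<lambda>x. (c * ?u x) mod int p, 0)"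
    using c by (simp add: lamplighter_pow_base)
  obtain g where g: "\<phi> (0, y) = (g, ?z)"
    by (metis prod.collapse translation_image_def)
  have carrier: "(0, y) \<in> carrier \<Gamma>" "(lamp p c 0, 0) \<in> carrier \<Gamma>" "(lamp p c y, 0) \<in> carrier \<Gamma>"
    using y lamp_in_Sigma_wr[OF p_pos]
    by (simp_all add: translation_in_carrier base_in_carrier lamp_origin_in_Sigma_wr)
  have "(0, y) \<otimes>\<^bsub>\<Gamma>\<^esub> (lamp p c 0, 0) = (lamp p c y, 0) \<otimes>\<^bsub>\<Gamma>\<^esub> (0, y)"
    by (simp add: lamplighter_translate_commute lamp_def)
  then have "\<phi> (0, y) \<otimes>\<^bsub>\<Gamma>\<^esub> \<phi> (lamp p c 0, 0) = \<phi> (lamp p c y, 0) \<otimes>\<^bsub>\<Gamma>\<^esub> \<phi> (0, y)"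
    using carrier by (metis hom_mult)
  moreover have "\<phi> (0, y) \<otimes>\<^bsub>\<Gamma>\<^esub> \<phi> (lamp p c 0, 0)
      = (\<lambda>x. (c * ?u (x - ?z)) mod int p, 0) \<otimes>\<^bsub>\<Gamma>\<^esub> \<phi> (0, y)"
    unfolding pow g by (rule lamplighter_translate_commute)
  moreover have "(\<lambda>x. (c * ?u (x - ?z)) mod int p) \<in> Sigma_wr p k"
    using Sigma_wr_shift_combination[OF p_pos delta_image_in_Sigma_wr delta_image_in_Sigma_wr
        translation_image_in_lattice[OF y], of 0 c] by simp
  ultimately show ?thesis
    using carrier translation_image_in_lattice[OF y] by (simp add: base_in_carrier)
qed

lemma image_base:
  assumes "finite A" "s \<in> Sigma_wr p k" "{x. s x \<noteq> 0} \<subseteq> A"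
  shows "\<phi> (s, 0) = (\<lambda>x. (\<Sum>z\<in>A. s z * delta_image (x - translation_image z)) mod int p, 0)"
  using assms
proof (induction A arbitrary: s rule: finite_induct)
  case empty
  then have "(s, 0) = \<one>\<^bsub>\<Gamma>\<^esub>" by (auto simp: lamplighter_one zero_fun_def)
  then have "\<phi> (s, 0) = \<one>\<^bsub>\<Gamma>\<^esub>" by simp
  then show ?case by (simp add: lamplighter_one zero_fun_def)
next
  case (insert y A)
  let ?t = "\<lambda>s z x. s z * delta_image (x - translation_image z)"
  have s: "s \<in> Sigma_wr p k" and s': "s(y := 0) \<in> Sigma_wr p k"
    using insert.prems(1) Sigma_wr_upd_0[OF p_pos] by auto
  have IH: "\<phi> (s(y := 0), 0) = (\<lambda>x. (\<Sum>z\<in>A. ?t s z x) mod int p, 0)"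
  proof -
    have "{x. (s(y := 0)) x \<noteq> 0} \<subseteq> A" using insert.prems(2) by auto
    then have "\<phi> (s(y := 0), 0) = (\<lambda>x. (\<Sum>z\<in>A. ?t (s(y := 0)) z x) mod int p, 0)"
      by (rule insert.IH[OF s'])
    also have "(\<lambda>x. (\<Sum>z\<in>A. ?t (s(y := 0)) z x) mod int p)
        = (\<lambda>x. (\<Sum>z\<in>A. ?t s z x) mod int p)"
      using insert.hyps(2) by (intro ext arg_cong[where f = "\<lambda>t. t mod int p"] sum.cong) auto
    finally show ?thesis .
  qed
  show ?case
  proof (cases "s y = 0")
    case True
    then show ?thesis
      using IH insert.hyps by (simp add: fun_upd_idem zero_fun_def fun_diff_def)
  next
    case False
    then have y: "y \<in> lattice k" using s by (auto simp: Sigma_wr_def)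
    have "(s, 0) = (s(y := 0), 0) \<otimes>\<^bsub>\<Gamma>\<^esub> (lamp p (s y) y, 0)"
      using s by (intro prod_eqI ext) (auto simp: lamplighter_mult lamp_def)
    then have "\<phi> (s, 0) = \<phi> (s(y := 0), 0) \<otimes>\<^bsub>\<Gamma>\<^esub> \<phi> (lamp p (s y) y, 0)"
      using s' y by (simp add: base_in_carrier lamp_in_Sigma_wr[OF p_pos])
    also have "\<dots> = (\<lambda>x. (\<Sum>z\<in>A. ?t s z x) mod int p, 0)
        \<otimes>\<^bsub>\<Gamma>\<^esub> (\<lambda>x. ?t s y x mod int p, 0)"
      using IH image_lamp[OF _ _ y, of "s y"] s by (simp add: Sigma_wr_def)
    finally show ?thesis
      using insert.hyps
      by (simp add: lamplighter_mult mod_add_eq add.commute fun_diff_def zero_fun_def)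
  qed
qed

lemma delta_image_convolution_inverse:
  obtains B w where "finite B" "B \<subseteq> lattice k"
    "\<And>x. (\<Sum>z\<in>B. w z * delta_image (x - z)) mod int p = (if x = 0 then 1 else 0)"
proof -
  have "(lamp p 1 0, 0) \<in> \<phi> ` carrier \<Gamma>"
    using iso base_in_carrier[OF lamp_origin_in_Sigma_wr] by (simp add: iso_iff)
  then obtain e where e: "e \<in> carrier \<Gamma>" "\<phi> e = (lamp p 1 0, 0)" by (metis imageE)
  define s where "s = fst e"
  define S where "S = {x. s x \<noteq> 0}"
  have "snd e = 0" using snd_image_eq_0_iff[OF e(1)] e(2) by simp
  then have es: "e = (s, 0)" by (simp add: s_def prod_eq_iff)
  have s: "s \<in> Sigma_wr p k" using e(1) es by (simp add: lamplighter_carrier)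
  have S: "finite S" "S \<subseteq> lattice k" using s by (auto simp: S_def Sigma_wr_def)
  have "\<phi> (s, 0) = (\<lambda>x. (\<Sum>z\<in>S. s z * delta_image (x - translation_image z)) mod int p, 0)"
    using image_base[OF S(1) s] by (simp add: S_def)
  then have lamp_eq:
    "lamp p 1 0 = (\<lambda>x. (\<Sum>z\<in>S. s z * delta_image (x - translation_image z)) mod int p)"
    using e(2) es by simp
  define w where "w b = (\<Sum>z\<in>{z \<in> S. translation_image z = b}. s z)" for b
  show thesis
  proof
    show "finite (translation_image ` S)" using S by simp
    show "translation_image ` S \<subseteq> lattice k" using S translation_image_in_lattice by auto
    fix x
    have "(\<Sum>b\<in>translation_image ` S. w b * delta_image (x - b))
        = (\<Sum>z\<in>S. s z * delta_image (x - translation_image z))"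
      unfolding w_def by (rule sum_mult_regroup_image[OF S(1), symmetric])
    also have "\<dots> mod int p = lamp p 1 0 x"
      by (simp add: lamp_eq)
    finally show "(\<Sum>b\<in>translation_image ` S. w b * delta_image (x - b)) mod int p
        = (if x = 0 then 1 else 0)"
      using prime_gt_1_nat[OF prime] by (simp add: lamp_def zero_fun_def)
  qed
qed

lemma delta_image_is_lamp: "\<exists>a \<in> lattice k. \<exists>m \<in> {1..<int p}. delta_image = lamp p m a"
proof -
  let ?u = delta_image
  define U where "U = {x. \<not> int p dvd ?u x}"
  have range: "0 \<le> ?u x" "?u x < int p" for x
    using delta_image_in_Sigma_wr by (auto simp: Sigma_wr_def)
  have "int p dvd ?u x \<longleftrightarrow> ?u x = 0" for x
    using range[of x] zdvd_not_zless[of "?u x" "int p"] by fastforce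
  then have U_eq: "U = {x. ?u x \<noteq> 0}" by (simp add: U_def)
  have U: "finite U" "U \<subseteq> lattice k"
    using delta_image_in_Sigma_wr by (auto simp: U_eq Sigma_wr_def)
  obtain B w where B: "finite B" "B \<subseteq> lattice k"
    and conv: "\<And>x. (\<Sum>z\<in>B. w z * ?u (x - z)) mod int p = (if x = 0 then 1 else 0)"
    using delta_image_convolution_inverse by blast
  obtain h :: "(nat \<Rightarrow> int) \<Rightarrow> int"
    where h: "\<And>x y. h (x + y) = h x + h y" "inj_on h (U \<union> B)"
    using exists_additive_inj_on_lattice[of "U \<union> B" k] U B by auto
  have "inj_on h U" "inj_on h {z \<in> B. \<not> int p dvd w z}"
    using h(2) by (auto intro: inj_on_subset)
  moreover have "prime (int p)" using prime by simp
  ultimately have "\<exists>a. U = {a}"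
    using convolution_delta_support_singleton[where p = "int p" and u = ?u and w = w and h = h]
      B(1) U(1) conv h(1) unfolding U_def by blast
  then obtain a where a: "U = {a}" by blast
  have "?u = lamp p (?u a) a"
  proof
    fix x
    show "?u x = lamp p (?u a) a x"
      using a range[of x] by (cases "x = a") (auto simp: U_eq lamp_def)
  qed
  moreover have "?u a \<in> {1..<int p}" "a \<in> lattice k"
    using a range[of a] U(2) by (auto simp: U_eq)
  ultimately show ?thesis by blast
qed

end

theorem lemma3p1:
  fixes p k :: nat and \<phi> :: "((nat \<Rightarrow> int) \<Rightarrow> int) \<times> (nat \<Rightarrow> int) \<Rightarrow> ((nat \<Rightarrow> int) \<Rightarrow> int) \<times> (nat \<Rightarrow> int)"
  assumes "prime p" and "k \<ge> 1"
    and "\<phi> \<in> iso (lamplighter p k) (lamplighter p k)"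
  shows "\<exists>x0 \<in> lattice k. \<exists>m :: int. m \<in> {1..<int p} \<and>
           \<phi> (lamp p 1 (\<lambda>_. 0), (\<lambda>_. 0)) = (lamp p m x0, (\<lambda>_. 0))"
proof -
  interpret lamplighter_automorphism p k \<phi>
    using assms(1,3) by unfold_locales
  have "\<phi> (lamp p 1 (\<lambda>_. 0), \<lambda>_. 0) = (delta_image, \<lambda>_. 0)"
    using image_base_snd[OF lamp_origin_in_Sigma_wr] by (simp add: delta_image_def zero_fun_def)
  moreover obtain x0 m where "x0 \<in> lattice k" "m \<in> {1..<int p}" "delta_image = lamp p m x0"
    using delta_image_is_lamp by blast
  ultimately show ?thesis by auto
qed

end
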